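(* Every hyperpath is $\mathbb{Z}_2\times\mathbb{Z}_2$-cordial.
   Context: A path hypergraph with edges $e_1,\dots,e_m$ ($m\ge 1$, in this order) is a finite hypergraph $H=(V,E)$ with $E=\{e_1,\dots,e_m\}$, $V=e_1\cup\cdots\cup e_m$, $|e_i\cap e_{i+1}|=1$ for $1\le i<m$, and $e_i\cap e_j=\emptyset$ whenever $|i-j|\ge 2$. A hyperpath is a path hypergraph in which every edge has at least 3 vertices. Let $A=\mathbb{Z}_2\times\mathbb{Z}_2$. For a labeling $c:V\to A$, write $v_c(a)=|c^{-1}(a)|$; $c$ is $A$-friendly if $|v_c(a)-v_c(b)|\le 1$ for all $a,b\in A$. It induces $c^*:E\to A$, $c^*(e)=\sum_{v\in e}c(v)$; write $e_{c^*}(a)=|(c^* )^{-1}(a)|$. $H$ is $A$-cordial if it admits an $A$-friendly labeling $c$ with $|e_{c^*}(a)-e_{c^*}(b)|\le 1$ for all $a,b\in A$. *)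

theory Defs
  imports Main "HOL-Library.Z2" "HOL-Library.Product_Plus"
begin

type_synonym klein = "bit \<times> bit"

text \<open>A path hypergraph given by its edges e_1,...,e_m in order (list es, m = length es).
  Indices are 0-based. The hypergraph is finite: every edge is a finite set.\<close>
definition path_hypergraph :: "'v set list \<Rightarrow> bool" where
  "path_hypergraph es \<longleftrightarrow>
     length es \<ge> 1 \<and>
     (\<forall>i < length es. finite (es ! i)) \<and>
     (\<forall>i. i + 1 < length es \<longrightarrow> card (es ! i \<inter> es ! (i + 1)) = 1) \<and>
     (\<forall>i < length es. \<forall>j < length es. i + 2 \<le> j \<longrightarrow> es ! i \<inter> es ! j = {})"

definition hyperpath :: "'v set list \<Rightarrow> bool" where
  "hyperpath es \<longleftrightarrow> path_hypergraph es \<and> (\<forall>i < length es. card (es ! i) \<ge> 3)"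

definition hvertices :: "'v set list \<Rightarrow> 'v set" where
  "hvertices es = \<Union> (set es)"

definition vcount :: "'v set list \<Rightarrow> ('v \<Rightarrow> klein) \<Rightarrow> klein \<Rightarrow> nat" where
  "vcount es c a = card {v \<in> hvertices es. c v = a}"

definition induced :: "('v \<Rightarrow> klein) \<Rightarrow> 'v set \<Rightarrow> klein" where
  "induced c e = (\<Sum>v\<in>e. c v)"

definition ecount :: "'v set list \<Rightarrow> ('v \<Rightarrow> klein) \<Rightarrow> klein \<Rightarrow> nat" where
  "ecount es c a = card {e \<in> set es. induced c e = a}"

definition A_friendly :: "'v set list \<Rightarrow> ('v \<Rightarrow> klein) \<Rightarrow> bool" where
  "A_friendly es c \<longleftrightarrow>
     (\<forall>a b. \<bar>int (vcount es c a) - int (vcount es c b)\<bar> \<le> 1)"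

definition A_cordial :: "'v set list \<Rightarrow> bool" where
  "A_cordial es \<longleftrightarrow>
     (\<exists>c. A_friendly es c \<and> (\<forall>a b. \<bar>int (ecount es c a) - int (ecount es c b)\<bar> \<le> 1))"

end

theory Submission
  imports Defs
begin

text \<open>
  The labelling is built by adding edges at the front of the path.  A new edge \<open>e\<close> meets the
  labelled part in a single vertex \<open>s\<close>, so its other \<open>card e - 1\<close> vertices can receive labels
  with any prescribed multiplicities \<open>M\<close>, and the label of \<open>e\<close> is the label of \<open>s\<close> plus an
  element depending only on the parities of \<open>M\<close>.  A labelling is summarised by a state
  \<open>(Dv, De, r)\<close>: the labels whose vertex resp. edge counts are one below the maximum, and a label
  \<open>r\<close> that a private vertex of the first edge may be given; that vertex becomes the shared vertex
  of the next edge.  One more vertex of each label changes neither the balance nor the edge labels,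
  so only \<open>card e - 1\<close> modulo 4 matters.  The induction is carried by a family of 28 sets of
  states, found by computer search: every hyperpath realises all states of some set of the family,
  and adding an edge leads from each set of the family to another one, which is checked by
  evaluation.
\<close>

subsection \<open>Count vectors over the Klein four-group\<close>

text \<open>Type \<open>bit\<close> is not an instance of \<open>enum\<close>; the list \<open>klein_elems\<close> keeps quantifiers and sums
  over the group executable.\<close>

definition klein_elems :: "klein list" where
  "klein_elems = [(0,0), (1,0), (0,1), (1,1)]"

lemma bit_cases: "(x::bit) = 0 \<or> x = 1"
  by (metis bit_not_zero_iff)

lemma set_klein_elems: "set klein_elems = UNIV"
proof -
  have "a \<in> set klein_elems" for a :: klein
    using bit_cases[of "fst a"] bit_cases[of "snd a"]
    by (cases a) (auto simp: klein_elems_def)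
  then show ?thesis by blast
qed

lemma distinct_klein_elems: "distinct klein_elems"
  by (simp add: klein_elems_def)

lemma finite_klein_UNIV: "finite (UNIV :: klein set)"
  by (metis List.finite_set set_klein_elems)

lemma list_all_klein_elems: "list_all P klein_elems \<longleftrightarrow> (\<forall>a. P a)"
  by (simp add: list_all_iff set_klein_elems)

lemma klein_add_self [simp]: "(a::klein) + a = 0"
  using bit_cases[of "fst a"] bit_cases[of "snd a"] by (cases a) (auto simp: zero_prod_def)

text \<open>A count vector \<open>M :: klein \<Rightarrow> nat\<close> describes a multiset of labels.\<close>

definition count_total :: "(klein \<Rightarrow> nat) \<Rightarrow> nat" where
  "count_total M = (\<Sum>a\<leftarrow>klein_elems. M a)"

definition count_sum :: "(klein \<Rightarrow> nat) \<Rightarrow> klein" where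
  "count_sum M = (\<Sum>a\<leftarrow>klein_elems. if odd (M a) then a else 0)"

lemma count_total_eq_sum: "count_total M = (\<Sum>a\<in>UNIV. M a)"
  by (simp add: count_total_def sum_list_distinct_conv_sum_set distinct_klein_elems set_klein_elems)

lemma count_sum_eq_sum: "count_sum M = (\<Sum>a\<in>UNIV. if odd (M a) then a else 0)"
  by (simp add: count_sum_def sum_list_distinct_conv_sum_set distinct_klein_elems set_klein_elems)

lemma count_sum_Suc_at: "count_sum (M(b := Suc (M b))) = b + count_sum M"
proof -
  have "count_sum (M(b := Suc (M b))) =
      (if odd (Suc (M b)) then b else 0) + (\<Sum>a\<in>UNIV - {b}. if odd (M a) then a else 0)"
    unfolding count_sum_eq_sum by (simp add: sum.remove[OF finite_klein_UNIV, of b])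
  also have "\<dots> = b + count_sum M"
    unfolding count_sum_eq_sum by (simp add: sum.remove[OF finite_klein_UNIV, of b] add.assoc)
  finally show ?thesis .
qed

text \<open>The four elements of the group add up to 0.\<close>

lemma count_sum_Suc: "count_sum (\<lambda>a. Suc (M a)) = count_sum M"
  unfolding count_sum_def klein_elems_def
  by (cases "odd (M (1,0))"; cases "odd (M (0,1))"; cases "odd (M (1,1))")
    (simp_all add: zero_prod_def)

lemma card_label_insert:
  assumes "finite X" "v \<notin> X"
  shows "card {w \<in> insert v X. c w = a} = of_bool (c v = a) + card {w \<in> X. c w = a}"
proof -
  have "{w \<in> insert v X. c w = a} = (if c v = a then insert v {w \<in> X. c w = a} else {w \<in> X. c w = a})"
    by auto
  then show ?thesis using assms by simp
qed

lemma sum_eq_count_sum: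
  fixes c :: "'v \<Rightarrow> klein"
  assumes "finite X"
  shows "sum c X = count_sum (\<lambda>a. card {v \<in> X. c v = a})"
  using assms
proof (induction X rule: finite_induct)
  case empty
  then show ?case by (simp add: count_sum_def klein_elems_def zero_prod_def)
next
  case (insert v X)
  let ?N = "\<lambda>a. card {w \<in> X. c w = a}"
  have "sum c (insert v X) = c v + count_sum ?N"
    using insert by simp
  also have "\<dots> = count_sum (?N(c v := Suc (?N (c v))))"
    by (rule count_sum_Suc_at[symmetric])
  also have "?N(c v := Suc (?N (c v))) = (\<lambda>a. card {w \<in> insert v X. c w = a})"
    by (rule ext) (unfold card_label_insert[OF insert.hyps], simp)
  finally show ?case .
qed

lemma labelling_with_counts:
  fixes M :: "'a \<Rightarrow> nat"
  assumes "finite (UNIV :: 'a set)" "finite X" "card X = (\<Sum>a\<in>UNIV. M a)"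
  shows "\<exists>g :: 'v \<Rightarrow> 'a. \<forall>a. card {v \<in> X. g v = a} = M a"
  using assms(2,3)
proof (induction X arbitrary: M rule: finite_induct)
  case empty
  then show ?case using assms(1) by simp
next
  case (insert v X)
  obtain b where b: "0 < M b"
    using insert.prems by (metis card.insert insert.hyps gr0I sum.neutral zero_less_Suc)
  let ?M = "M(b := M b - 1)"
  have "(\<Sum>a\<in>UNIV. M a) = Suc (\<Sum>a\<in>UNIV. ?M a)"
    using b by (simp add: sum.remove[OF assms(1), of b])
  then obtain g where g: "\<And>a. card {w \<in> X. g w = a} = ?M a"
    using insert by auto
  have "card {w \<in> insert v X. (g(v := b)) w = a} = M a" for a
  proof -
    have "{w \<in> X. (g(v := b)) w = a} = {w \<in> X. g w = a}"
      using insert.hyps by auto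
    then show ?thesis
      using card_label_insert[OF insert.hyps, of "g(v := b)" a] g[of a] b by auto
  qed
  then show ?case by blast
qed

lemma labelling_with_counts_at:
  fixes M :: "'a \<Rightarrow> nat"
  assumes "finite (UNIV :: 'a set)" "finite X" "x \<in> X" "card X = (\<Sum>a\<in>UNIV. M a)" "0 < M r"
  shows "\<exists>g :: 'v \<Rightarrow> 'a. g x = r \<and> (\<forall>a. card {v \<in> X. g v = a} = M a)"
proof -
  let ?M = "M(r := M r - 1)"
  have "card (X - {x}) = (\<Sum>a\<in>UNIV. ?M a)"
    using assms by (simp add: sum.remove[OF assms(1), of r])
  then obtain g where g: "\<And>a. card {v \<in> X - {x}. g v = a} = ?M a"
    using labelling_with_counts[OF assms(1)] assms(2) by blast
  have "card {v \<in> X. (g(x := r)) v = a} = M a" for a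
  proof -
    have "{v \<in> X - {x}. (g(x := r)) v = a} = {v \<in> X - {x}. g v = a}" by auto
    then have "card {v \<in> insert x (X - {x}). (g(x := r)) v = a} = of_bool (r = a) + ?M a"
      using card_label_insert[of "X - {x}" x "g(x := r)" a] assms(2) g[of a] by simp
    then show ?thesis
      unfolding insert_Diff[OF assms(3)] using assms(5) by auto
  qed
  then show ?thesis by (intro exI[of _ "g(x := r)"]) auto
qed

subsection \<open>Hyperpaths\<close>

definition head_private :: "'v set list \<Rightarrow> 'v set" where
  "head_private es = hd es - \<Union> (set (tl es))"

lemma head_private_Cons [simp]: "head_private (e # es) = e - hvertices es"
  by (simp add: head_private_def hvertices_def)

lemma hvertices_Cons [simp]: "hvertices (e # es) = e \<union> hvertices es"
  by (simp add: hvertices_def)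

lemma hvertices_Nil [simp]: "hvertices [] = {}"
  by (simp add: hvertices_def)

lemma hyperpathD:
  assumes "hyperpath es"
  shows "es \<noteq> []"
    and "i < length es \<Longrightarrow> finite (es ! i) \<and> 3 \<le> card (es ! i)"
    and "i + 1 < length es \<Longrightarrow> card (es ! i \<inter> es ! (i + 1)) = 1"
    and "j < length es \<Longrightarrow> i + 2 \<le> j \<Longrightarrow> es ! i \<inter> es ! j = {}"
  using assms by (auto simp: hyperpath_def path_hypergraph_def)

lemma hyperpath_edge:
  assumes "hyperpath es" "e \<in> set es"
  shows "finite e" "3 \<le> card e"
  using hyperpathD(2)[OF assms(1)] assms(2) by (auto simp: in_set_conv_nth)

lemma finite_hvertices: "hyperpath es \<Longrightarrow> finite (hvertices es)"
  unfolding hvertices_def using hyperpath_edge(1) by blast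

lemma hyperpath_tl:
  assumes "hyperpath (e # es)" "es \<noteq> []"
  shows "hyperpath es"
  unfolding hyperpath_def path_hypergraph_def
proof (intro conjI allI impI)
  note P = hyperpathD[OF assms(1)]
  show "1 \<le> length es" using assms(2) by (cases es) auto
  fix i j
  show "finite (es ! i)" "3 \<le> card (es ! i)" if "i < length es"
    using P(2)[of "Suc i"] that by auto
  show "card (es ! i \<inter> es ! (i + 1)) = 1" if "i + 1 < length es"
    using P(3)[of "Suc i"] that by simp
  show "es ! i \<inter> es ! j = {}" if "i < length es" "j < length es" "i + 2 \<le> j"
    using P(4)[of "Suc j" "Suc i"] that by simp
qed

lemma hyperpath_Cons_link:
  assumes "hyperpath (e # es)" "es \<noteq> []"
  shows "\<exists>s. e \<inter> hvertices es = {s} \<and> s \<in> head_private es"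
proof -
  note P = hyperpathD[OF assms(1)]
  obtain e2 es' where es: "es = e2 # es'" using assms(2) by (cases es) auto
  have "card (e \<inter> e2) = 1" using P(3)[of 0] es by simp
  then obtain s where s: "e \<inter> e2 = {s}" by (rule card_1_singletonE)
  have "e \<inter> es' ! j = {}" if "j < length es'" for j
    using P(4)[of "Suc (Suc j)" 0] that es by simp
  then have "e \<inter> X = {}" if "X \<in> set es'" for X
    using that by (metis in_set_conv_nth)
  then have "e \<inter> hvertices es' = {}" by (auto simp: hvertices_def)
  then show ?thesis using s unfolding es by auto
qed

lemma hyperpath_Cons_notin:
  assumes "hyperpath (e # es)" "es \<noteq> []"
  shows "e \<notin> set es"
proof
  assume "e \<in> set es"
  then have "e \<subseteq> hvertices es" by (auto simp: hvertices_def)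
  with hyperpath_Cons_link[OF assms] obtain s where "e = {s}" by auto
  with hyperpath_edge(2)[OF assms(1), of e] show False by simp
qed

lemma head_private_nonempty:
  assumes "hyperpath es"
  shows "head_private es \<noteq> {}"
proof -
  obtain e es' where es: "es = e # es'"
    using hyperpathD(1)[OF assms] by (cases es) auto
  obtain s where "e - hvertices es' \<supseteq> e - {s}"
    using hyperpath_Cons_link[of e es'] assms unfolding es by (cases "es' = []") auto
  moreover have "finite e" "card e \<ge> 3" using hyperpath_edge[OF assms] es by auto
  then have "card (e - {s}) \<ge> 2" by (auto simp: card_Diff_singleton_if)
  then have "e - {s} \<noteq> {}" by (metis card.empty not_numeral_le_zero)
  ultimately show ?thesis unfolding es by auto
qed

lemma vcount_Cons:
  assumes "finite e" "finite (hvertices es)"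
  shows "vcount (e # es) c a = card {v \<in> e - hvertices es. c v = a} + vcount es c a"
proof -
  have "{v \<in> hvertices (e # es). c v = a} =
      {v \<in> e - hvertices es. c v = a} \<union> {v \<in> hvertices es. c v = a}"
    by auto
  then show ?thesis
    using assms unfolding vcount_def by (simp add: card_Un_disjoint disjoint_iff)
qed

lemma ecount_Cons:
  assumes "e \<notin> set es"
  shows "ecount (e # es) c a = of_bool (induced c e = a) + ecount es c a"
proof -
  have "{e' \<in> set (e # es). induced c e' = a} =
      (if induced c e = a then insert e {e' \<in> set es. induced c e' = a}
       else {e' \<in> set es. induced c e' = a})"
    by auto
  then show ?thesis using assms unfolding ecount_def by simp
qed

lemma vcount_cong:
  "(\<And>v. v \<in> hvertices es \<Longrightarrow> c v = c' v) \<Longrightarrow> vcount es c = vcount es c'"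
  unfolding vcount_def by (intro ext arg_cong[where f = card] Collect_cong) auto

lemma ecount_cong:
  assumes "\<And>v. v \<in> hvertices es \<Longrightarrow> c v = c' v"
  shows "ecount es c = ecount es c'"
proof -
  have "induced c e = induced c' e" if "e \<in> set es" for e
    unfolding induced_def using that assms by (intro sum.cong) (auto simp: hvertices_def)
  then show ?thesis
    unfolding ecount_def by (intro ext arg_cong[where f = card] Collect_cong) auto
qed

subsection \<open>States and edge steps\<close>

definition balanced_up_to :: "'a set \<Rightarrow> ('a \<Rightarrow> nat) \<Rightarrow> bool" where
  "balanced_up_to D N \<longleftrightarrow> (\<exists>C. \<forall>a. N a + of_bool (a \<in> D) = C)"

lemma balanced_up_to_diff_le_1:
  assumes "balanced_up_to D N"
  shows "\<bar>int (N a) - int (N b)\<bar> \<le> 1"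
proof -
  obtain C where "\<And>a. N a + of_bool (a \<in> D) = C"
    using assms unfolding balanced_up_to_def by blast
  from this[of a] this[of b] show ?thesis
    by (cases "a \<in> D"; cases "b \<in> D") auto
qed

lemma balanced_up_to_add:
  assumes "balanced_up_to D' N" "\<And>a. P a + of_bool (a \<in> D) = of_bool (a \<in> D') + t"
  shows "balanced_up_to D (\<lambda>a. P a + N a)"
proof -
  obtain C where C: "\<And>a. N a + of_bool (a \<in> D') = C"
    using assms(1) unfolding balanced_up_to_def by blast
  have "P a + N a + of_bool (a \<in> D) = C + t" for a
    using C[of a] assms(2)[of a] by linarith
  then show ?thesis unfolding balanced_up_to_def by blast
qed

type_synonym state = "klein set \<times> klein set \<times> klein"

fun realizes :: "'v set list \<Rightarrow> state \<Rightarrow> bool" where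
  "realizes es (Dv, De, r) \<longleftrightarrow>
     (\<forall>x \<in> head_private es. \<exists>c. c x = r \<and>
        balanced_up_to Dv (vcount es c) \<and> balanced_up_to De (ecount es c))"

text \<open>
  Adding an edge with \<open>k\<close> new vertices at a vertex labelled \<open>y\<close>: \<open>M\<close> counts the labels of the
  new vertices, and \<open>y + count_sum M\<close> is the label of the new edge.
\<close>

fun edge_step :: "nat \<Rightarrow> state \<Rightarrow> state \<Rightarrow> bool" where
  "edge_step k (Dv', De', y) (Dv, De, r) \<longleftrightarrow>
     (\<exists>M t (t' :: nat). count_total M = k \<and> 0 < M r \<and>
        (\<forall>a. M a + of_bool (a \<in> Dv) = of_bool (a \<in> Dv') + t) \<and>
        (\<forall>a. of_bool (a = y + count_sum M) + of_bool (a \<in> De) = of_bool (a \<in> De') + t'))"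

declare edge_step.simps [simp del]

lemma edge_step_add_4:
  assumes "edge_step k \<sigma>' \<sigma>"
  shows "edge_step (k + 4) \<sigma>' \<sigma>"
proof -
  obtain Dv' De' y Dv De r where \<sigma>: "\<sigma>' = (Dv', De', y)" "\<sigma> = (Dv, De, r)"
    by (cases \<sigma>', cases \<sigma>)
  obtain M t and t' :: nat where M: "count_total M = k" "0 < M r"
      "\<forall>a. M a + of_bool (a \<in> Dv) = of_bool (a \<in> Dv') + t"
      "\<forall>a. of_bool (a = y + count_sum M) + of_bool (a \<in> De) = of_bool (a \<in> De') + t'"
    using assms unfolding \<sigma> edge_step.simps by blast
  have "count_total (\<lambda>a. Suc (M a)) = k + 4"
    using M(1) by (simp add: count_total_def klein_elems_def)
  then show ?thesis
    unfolding \<sigma> edge_step.simps using M count_sum_Suc[of M]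
    by (intro exI[of _ "\<lambda>a. Suc (M a)"] exI[of _ "Suc t"] exI[of _ t']) simp
qed

lemma edge_step_add_mult_4: "edge_step k \<sigma>' \<sigma> \<Longrightarrow> edge_step (k + 4 * q) \<sigma>' \<sigma>"
proof (induction q)
  case (Suc q)
  have "k + 4 * Suc q = (k + 4 * q) + 4" by simp
  then show ?case using Suc edge_step_add_4 by metis
qed simp

lemma extend_by_edge:
  assumes e: "finite e" "finite (hvertices es)" "e \<notin> set es"
    and old: "balanced_up_to Dv' (vcount es c')" "balanced_up_to De' (ecount es c')"
      "(\<Sum>v \<in> e \<inter> hvertices es. c' v) = y"
    and step: "edge_step (card (e - hvertices es)) (Dv', De', y) (Dv, De, r)"
    and x: "x \<in> e - hvertices es"
  shows "\<exists>c. c x = r \<and> balanced_up_to Dv (vcount (e # es) c) \<and> balanced_up_to De (ecount (e # es) c)"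
proof -
  let ?X = "e - hvertices es"
  obtain M t and t' :: nat where M: "count_total M = card ?X" "0 < M r"
      "\<And>a. M a + of_bool (a \<in> Dv) = of_bool (a \<in> Dv') + t"
      "\<And>a. of_bool (a = y + count_sum M) + of_bool (a \<in> De) = of_bool (a \<in> De') + t'"
    using step unfolding edge_step.simps by blast
  have card_X: "card ?X = (\<Sum>a\<in>UNIV. M a)"
    using M(1) by (simp add: count_total_eq_sum)
  obtain g where g: "g x = r" "\<And>a. card {v \<in> ?X. g v = a} = M a"
    using labelling_with_counts_at[OF finite_klein_UNIV finite_Diff[OF e(1)] x card_X M(2)]
    by blast
  define c where "c v = (if v \<in> ?X then g v else c' v)" for v
  have agree: "c v = c' v" if "v \<in> hvertices es" for v
    using that by (simp add: c_def)
  have "{v \<in> ?X. c v = a} = {v \<in> ?X. g v = a}" for a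
    by (auto simp: c_def)
  then have vc: "vcount (e # es) c = (\<lambda>a. M a + vcount es c' a)"
    using vcount_Cons[OF e(1,2), of c] vcount_cong[of es c c', OF agree] g(2) by (intro ext) simp
  have "induced c e = sum c (e \<inter> hvertices es) + sum c ?X"
    unfolding induced_def using e(1) by (rule sum.Int_Diff)
  also have "sum c (e \<inter> hvertices es) = y"
    using old(3) by (simp add: agree)
  also have "sum c ?X = count_sum M"
    using sum_eq_count_sum[of ?X g] e(1) g(2) by (simp add: c_def)
  finally have "induced c e = y + count_sum M" .
  then have ec: "ecount (e # es) c = (\<lambda>a. of_bool (a = y + count_sum M) + ecount es c' a)"
    using ecount_Cons[OF e(3), of c] ecount_cong[of es c c', OF agree] by auto
  show ?thesis
  proof (intro exI conjI)
    show "c x = r" using x g(1) by (simp add: c_def)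
    show "balanced_up_to Dv (vcount (e # es) c)"
      unfolding vc by (rule balanced_up_to_add[OF old(1) M(3)])
    show "balanced_up_to De (ecount (e # es) c)"
      unfolding ec by (rule balanced_up_to_add[OF old(2) M(4)])
  qed
qed

lemma realizes_single:
  assumes "finite e" "edge_step (card e) ({}, {}, 0) \<sigma>"
  shows "realizes [e] \<sigma>"
proof -
  obtain Dv De r where \<sigma>: "\<sigma> = (Dv, De, r)" by (cases \<sigma>)
  let ?c = "\<lambda>_. 0 :: klein"
  have "balanced_up_to {} (vcount [] ?c)" "balanced_up_to {} (ecount [] ?c)"
    by (auto simp: balanced_up_to_def vcount_def ecount_def)
  then have "\<exists>c. c x = r \<and> balanced_up_to Dv (vcount [e] c) \<and> balanced_up_to De (ecount [e] c)"
    if "x \<in> e" for x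
    using extend_by_edge[of e "[]" "{}" ?c "{}" 0 Dv De r x] assms that unfolding \<sigma> by simp
  then show ?thesis unfolding \<sigma> by simp
qed

lemma realizes_Cons:
  assumes "hyperpath (e # es)" "es \<noteq> []" "realizes es \<sigma>'" "edge_step (card e - 1) \<sigma>' \<sigma>"
  shows "realizes (e # es) \<sigma>"
proof -
  obtain Dv' De' y Dv De r where \<sigma>: "\<sigma>' = (Dv', De', y)" "\<sigma> = (Dv, De, r)"
    by (cases \<sigma>', cases \<sigma>)
  obtain s where s: "e \<inter> hvertices es = {s}" "s \<in> head_private es"
    using hyperpath_Cons_link[OF assms(1,2)] by blast
  obtain c' where c': "c' s = y" "balanced_up_to Dv' (vcount es c')" "balanced_up_to De' (ecount es c')"
    using assms(3) s(2) unfolding \<sigma> by auto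
  have fin: "finite e" "finite (hvertices es)"
    using hyperpath_edge(1)[OF assms(1)] finite_hvertices[OF hyperpath_tl[OF assms(1,2)]] by auto
  have "e - hvertices es = e - {s}" "s \<in> e"
    using s(1) by auto
  then have "card (e - hvertices es) = card e - 1"
    using fin by simp
  then show ?thesis
    using extend_by_edge[OF fin hyperpath_Cons_notin[OF assms(1,2)] c'(2,3)] assms(4) c'(1) s(1)
    unfolding \<sigma> by simp
qed

subsection \<open>The certificate\<close>

text \<open>
  Summing the two conditions of \<open>edge_step\<close> over the four labels determines \<open>t\<close> and \<open>t'\<close>,
  and then \<open>M\<close>; the check only has to verify the resulting candidate.
\<close>

fun edge_step_check :: "nat \<Rightarrow> state \<Rightarrow> state \<Rightarrow> bool" where
  "edge_step_check k (Dv', De', y) (Dv, De, r) \<longleftrightarrow>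
     (let t = (k + card Dv - card Dv') div 4;
          t' = (card De + 1 - card De') div 4;
          M = (\<lambda>a. of_bool (a \<in> Dv') + t - of_bool (a \<in> Dv))
      in count_total M = k \<and> 0 < M r \<and>
         list_all (\<lambda>a. M a + of_bool (a \<in> Dv) = of_bool (a \<in> Dv') + t) klein_elems \<and>
         list_all (\<lambda>a. of_bool (a = y + count_sum M) + of_bool (a \<in> De) = of_bool (a \<in> De') + t')
           klein_elems)"

lemma edge_step_check_sound:
  assumes "edge_step_check k \<sigma>' \<sigma>"
  shows "edge_step k \<sigma>' \<sigma>"
proof -
  obtain Dv' De' y Dv De r where \<sigma>: "\<sigma>' = (Dv', De', y)" "\<sigma> = (Dv, De, r)"
    by (cases \<sigma>', cases \<sigma>)
  show ?thesis
    using assms unfolding \<sigma> edge_step.simps edge_step_check.simps Let_def list_all_klein_elems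
    by blast
qed

definition certified_step :: "nat \<Rightarrow> state list \<Rightarrow> state list \<Rightarrow> bool" where
  "certified_step k S S'' \<longleftrightarrow> list_all (\<lambda>\<sigma>. find (\<lambda>\<sigma>'. edge_step_check k \<sigma>' \<sigma>) S \<noteq> None) S''"

lemma certified_step_sound:
  assumes "certified_step k S S''" "\<sigma> \<in> set S''"
  shows "\<exists>\<sigma>' \<in> set S. edge_step (k + 4 * q) \<sigma>' \<sigma>"
  using assms edge_step_check_sound edge_step_add_mult_4
  unfolding certified_step_def list_all_iff find_None_iff by blast

definition family :: "state list list" where
  "family = [
    [({(0,0),(1,0),(0,1)}, {}, (1,1)), ({(0,0),(0,1),(1,1)}, {}, (1,0)),
     ({(1,0),(0,1),(1,1)}, {}, (0,0))],
    [({(0,0)}, {(1,0)}, (0,1)), ({(1,0)}, {(1,1)}, (0,0)), ({(0,1)}, {(0,1)}, (1,0)),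
     ({(1,1)}, {(1,0)}, (0,1))],
    [({(0,0),(1,0)}, {(0,0)}, (1,1)), ({(0,0),(1,0)}, {(1,1)}, (0,1)),
     ({(1,0),(0,1)}, {(0,0)}, (0,1)), ({(1,0),(1,1)}, {(1,0)}, (0,0)),
     ({(0,1),(1,1)}, {(0,0)}, (1,0))],
    [({(0,1)}, {(1,0),(0,1)}, (0,0)), ({(0,1)}, {(1,0),(0,1)}, (1,0)),
     ({(0,1)}, {(1,0),(0,1)}, (1,1)), ({(1,1)}, {(1,0),(1,1)}, (0,1)),
     ({(1,1)}, {(0,1),(1,1)}, (0,0)), ({(1,1)}, {(0,1),(1,1)}, (1,0))],
    [({(0,0),(1,0),(1,1)}, {(0,1),(1,1)}, (0,1)), ({(0,0),(0,1),(1,1)}, {(0,0),(1,1)}, (1,0)),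
     ({(0,0),(0,1),(1,1)}, {(1,0),(0,1)}, (1,0)), ({(0,0),(0,1),(1,1)}, {(1,0),(1,1)}, (0,1)),
     ({(1,0),(0,1),(1,1)}, {(0,0),(0,1)}, (0,0)), ({(1,0),(0,1),(1,1)}, {(0,0),(0,1)}, (1,1)),
     ({(1,0),(0,1),(1,1)}, {(1,0),(1,1)}, (0,0))],
    [({(0,0),(1,0)}, {}, (0,1)), ({(0,0),(1,0)}, {}, (1,1)), ({(0,0),(0,1)}, {}, (1,1)),
     ({(0,0),(1,1)}, {}, (1,0)), ({(1,0),(0,1)}, {}, (0,0)), ({(0,1),(1,1)}, {}, (0,0))],
    [({(0,0),(0,1)}, {(1,0),(0,1),(1,1)}, (1,0)), ({(0,0),(1,1)}, {(0,0),(1,0),(0,1)}, (0,1)),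
     ({(0,0),(1,1)}, {(1,0),(0,1),(1,1)}, (1,0)), ({(0,0),(1,1)}, {(1,0),(0,1),(1,1)}, (0,1)),
     ({(1,0),(0,1)}, {(0,0),(1,0),(1,1)}, (1,1)), ({(1,0),(1,1)}, {(1,0),(0,1),(1,1)}, (0,1)),
     ({(0,1),(1,1)}, {(0,0),(1,0),(0,1)}, (1,0))],
    [({(0,0),(1,0)}, {(0,1)}, (0,1)), ({(0,0),(1,0)}, {(1,1)}, (0,1)),
     ({(1,0),(1,1)}, {(1,0)}, (0,0)), ({(0,1),(1,1)}, {(1,0)}, (0,0)),
     ({(0,1),(1,1)}, {(0,1)}, (1,0))],
    [({}, {}, (0,0)), ({}, {}, (1,0)), ({}, {}, (0,1)), ({}, {}, (1,1))],
    [({(0,0),(1,0)}, {(1,0),(0,1)}, (1,1)), ({(0,0),(0,1)}, {(0,0),(1,0)}, (1,1)),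
     ({(0,0),(1,1)}, {(0,0),(0,1)}, (0,1)), ({(0,0),(1,1)}, {(1,0),(1,1)}, (0,1)),
     ({(1,0),(0,1)}, {(0,0),(1,0)}, (0,0)), ({(1,0),(0,1)}, {(0,0),(1,0)}, (1,1)),
     ({(1,0),(1,1)}, {(0,0),(1,0)}, (0,1)), ({(0,1),(1,1)}, {(0,0),(0,1)}, (1,0)),
     ({(0,1),(1,1)}, {(0,0),(1,1)}, (0,0))],
    [({(0,0),(1,0),(0,1)}, {(0,0),(1,0),(0,1)}, (1,0)),
     ({(0,0),(1,0),(0,1)}, {(0,0),(1,0),(0,1)}, (1,1)),
     ({(0,0),(1,0),(1,1)}, {(0,0),(1,0),(1,1)}, (0,1)),
     ({(0,0),(0,1),(1,1)}, {(0,0),(0,1),(1,1)}, (0,1)),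
     ({(1,0),(0,1),(1,1)}, {(1,0),(0,1),(1,1)}, (1,0)),
     ({(1,0),(0,1),(1,1)}, {(1,0),(0,1),(1,1)}, (0,1)),
     ({(1,0),(0,1),(1,1)}, {(1,0),(0,1),(1,1)}, (1,1))],
    [({(0,0),(1,0)}, {(0,0),(0,1),(1,1)}, (0,1)), ({(0,0),(0,1)}, {(0,0),(1,0),(1,1)}, (1,0)),
     ({(0,0),(0,1)}, {(0,0),(1,0),(1,1)}, (0,1)), ({(0,0),(0,1)}, {(0,0),(1,0),(1,1)}, (1,1)),
     ({(0,0),(1,1)}, {(0,0),(1,0),(0,1)}, (1,0)), ({(0,0),(1,1)}, {(0,0),(1,0),(0,1)}, (0,1)),
     ({(0,0),(1,1)}, {(0,0),(1,0),(0,1)}, (1,1)), ({(1,0),(0,1)}, {(0,0),(1,0),(0,1)}, (1,1)),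
     ({(1,0),(1,1)}, {(0,0),(1,0),(1,1)}, (0,1)), ({(0,1),(1,1)}, {(0,0),(0,1),(1,1)}, (1,0)),
     ({(0,1),(1,1)}, {(0,0),(0,1),(1,1)}, (1,1))],
    [({(0,0)}, {(0,0),(1,1)}, (0,1)), ({(0,1)}, {(0,0),(1,0)}, (1,1)),
     ({(0,1)}, {(1,0),(0,1)}, (0,0)), ({(0,1)}, {(1,0),(0,1)}, (1,1)),
     ({(1,1)}, {(1,0),(1,1)}, (0,1)), ({(1,1)}, {(0,1),(1,1)}, (0,0)),
     ({(1,1)}, {(0,1),(1,1)}, (1,0))],
    [({(0,0)}, {(1,0)}, (0,1)), ({(1,0)}, {(0,0)}, (1,1)), ({(1,1)}, {(1,0)}, (0,1)),
     ({(1,1)}, {(0,1)}, (0,0))],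
    [({(0,0),(0,1)}, {(1,0),(0,1),(1,1)}, (1,0)), ({(0,0),(1,1)}, {(0,0),(1,0),(1,1)}, (1,1)),
     ({(0,0),(1,1)}, {(0,0),(0,1),(1,1)}, (1,1)), ({(1,0),(0,1)}, {(1,0),(0,1),(1,1)}, (1,0)),
     ({(1,0),(1,1)}, {(0,0),(1,0),(0,1)}, (0,1)), ({(1,0),(1,1)}, {(0,0),(0,1),(1,1)}, (1,0)),
     ({(0,1),(1,1)}, {(0,0),(1,0),(0,1)}, (1,1)), ({(0,1),(1,1)}, {(0,0),(1,0),(1,1)}, (0,1))],
    [({}, {(1,0),(0,1)}, (0,0)), ({}, {(1,0),(0,1)}, (0,1)), ({}, {(1,0),(0,1)}, (1,1)),
     ({}, {(1,0),(1,1)}, (0,0)), ({}, {(1,0),(1,1)}, (1,0)), ({}, {(0,1),(1,1)}, (1,1))],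
    [({(0,0)}, {(1,0),(0,1),(1,1)}, (1,0)), ({(0,0)}, {(1,0),(0,1),(1,1)}, (0,1)),
     ({(0,0)}, {(1,0),(0,1),(1,1)}, (1,1)), ({(1,0)}, {(0,0),(0,1),(1,1)}, (0,1)),
     ({(1,0)}, {(0,0),(0,1),(1,1)}, (1,1)), ({(0,1)}, {(0,0),(1,0),(1,1)}, (1,1)),
     ({(1,1)}, {(0,0),(1,0),(0,1)}, (1,0)), ({(1,1)}, {(0,0),(1,0),(0,1)}, (0,1))],
    [({}, {(1,0),(0,1),(1,1)}, (0,0)), ({}, {(1,0),(0,1),(1,1)}, (1,0)),
     ({}, {(1,0),(0,1),(1,1)}, (0,1)), ({}, {(1,0),(0,1),(1,1)}, (1,1))],
    [({}, {(1,0)}, (1,1)), ({}, {(0,1)}, (1,1)), ({}, {(1,1)}, (0,0)), ({}, {(1,1)}, (1,1))],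
    [({(0,0),(1,0)}, {(0,1),(1,1)}, (1,1)), ({(0,0),(1,1)}, {(1,0),(0,1)}, (1,0)),
     ({(1,0),(0,1)}, {(1,0),(0,1)}, (0,0)), ({(1,0),(0,1)}, {(1,0),(1,1)}, (0,0)),
     ({(1,0),(0,1)}, {(0,1),(1,1)}, (0,0)), ({(1,0),(1,1)}, {(1,0),(0,1)}, (0,1)),
     ({(0,1),(1,1)}, {(1,0),(0,1)}, (0,0)), ({(0,1),(1,1)}, {(1,0),(1,1)}, (0,0))],
    [({(0,0)}, {}, (0,1)), ({(1,0)}, {}, (0,1)), ({(1,0)}, {}, (1,1)), ({(0,1)}, {}, (1,0)),
     ({(0,1)}, {}, (1,1)), ({(1,1)}, {}, (1,0)), ({(1,1)}, {}, (0,1))],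
    [({}, {(0,0),(1,0),(0,1)}, (0,0)), ({}, {(0,0),(1,0),(0,1)}, (1,0)),
     ({}, {(0,0),(1,0),(0,1)}, (0,1)), ({}, {(0,0),(1,0),(1,1)}, (0,0)),
     ({}, {(0,0),(1,0),(1,1)}, (1,0)), ({}, {(0,0),(1,0),(1,1)}, (1,1)),
     ({}, {(0,0),(0,1),(1,1)}, (0,0)), ({}, {(0,0),(0,1),(1,1)}, (0,1)),
     ({}, {(0,0),(0,1),(1,1)}, (1,1))],
    [({(0,0),(1,0),(0,1)}, {(1,0)}, (0,1)), ({(0,0),(1,0),(0,1)}, {(0,1)}, (1,1)),
     ({(0,0),(0,1),(1,1)}, {(1,0)}, (0,1)), ({(0,0),(0,1),(1,1)}, {(0,1)}, (1,1)),
     ({(1,0),(0,1),(1,1)}, {(1,0)}, (0,1)), ({(1,0),(0,1),(1,1)}, {(0,1)}, (1,1))],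
    [({(0,0),(1,0),(0,1)}, {(1,0),(0,1)}, (1,0)), ({(0,0),(1,0),(0,1)}, {(1,0),(1,1)}, (0,1)),
     ({(0,0),(1,0),(0,1)}, {(0,1),(1,1)}, (0,0)), ({(0,0),(1,0),(1,1)}, {(1,0),(1,1)}, (1,0)),
     ({(0,0),(1,0),(1,1)}, {(0,1),(1,1)}, (0,0)), ({(1,0),(0,1),(1,1)}, {(1,0),(0,1)}, (1,0)),
     ({(1,0),(0,1),(1,1)}, {(1,0),(1,1)}, (0,1)), ({(1,0),(0,1),(1,1)}, {(0,1),(1,1)}, (1,0))],
    [({(0,0),(1,0),(0,1)}, {(1,0)}, (0,1)), ({(0,0),(1,0),(0,1)}, {(0,1)}, (1,1)),
     ({(0,0),(1,0),(1,1)}, {(0,0)}, (0,1)), ({(0,0),(0,1),(1,1)}, {(0,0)}, (1,1)),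
     ({(1,0),(0,1),(1,1)}, {(1,0)}, (0,1)), ({(1,0),(0,1),(1,1)}, {(0,1)}, (1,1))],
    [({(0,0),(1,0),(0,1)}, {(0,0),(1,0)}, (1,0)), ({(0,0),(1,0),(0,1)}, {(1,0),(1,1)}, (0,0)),
     ({(0,0),(1,0),(1,1)}, {(0,0),(1,0)}, (0,1)), ({(0,0),(1,0),(1,1)}, {(0,0),(1,1)}, (1,1)),
     ({(0,0),(1,0),(1,1)}, {(0,1),(1,1)}, (0,0)), ({(0,0),(0,1),(1,1)}, {(1,0),(1,1)}, (1,0)),
     ({(1,0),(0,1),(1,1)}, {(0,0),(0,1)}, (0,0)), ({(1,0),(0,1),(1,1)}, {(1,0),(0,1)}, (1,1)),
     ({(1,0),(0,1),(1,1)}, {(0,1),(1,1)}, (0,0))],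
    [({(0,0)}, {(0,0),(1,0),(1,1)}, (1,1)), ({(0,0)}, {(0,0),(0,1),(1,1)}, (0,1)),
     ({(0,0)}, {(0,0),(0,1),(1,1)}, (1,1)), ({(1,0)}, {(0,0),(1,0),(1,1)}, (1,0)),
     ({(0,1)}, {(0,0),(1,0),(0,1)}, (0,1)), ({(1,1)}, {(0,0),(0,1),(1,1)}, (1,1)),
     ({(1,1)}, {(1,0),(0,1),(1,1)}, (0,0)), ({(1,1)}, {(1,0),(0,1),(1,1)}, (1,0)),
     ({(1,1)}, {(1,0),(0,1),(1,1)}, (0,1))],
    [({(0,0),(1,0),(0,1)}, {(0,0),(1,0),(1,1)}, (0,1)),
     ({(0,0),(1,0),(0,1)}, {(0,0),(0,1),(1,1)}, (0,0)),
     ({(0,0),(1,0),(0,1)}, {(0,0),(0,1),(1,1)}, (1,0)),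
     ({(0,0),(1,0),(1,1)}, {(0,0),(1,0),(0,1)}, (0,1)),
     ({(0,0),(1,0),(1,1)}, {(0,0),(0,1),(1,1)}, (0,1)),
     ({(0,0),(1,0),(1,1)}, {(1,0),(0,1),(1,1)}, (0,0)),
     ({(0,0),(0,1),(1,1)}, {(0,0),(1,0),(0,1)}, (0,0)),
     ({(0,0),(0,1),(1,1)}, {(0,0),(1,0),(0,1)}, (1,1)),
     ({(0,0),(0,1),(1,1)}, {(0,0),(1,0),(1,1)}, (0,1)),
     ({(1,0),(0,1),(1,1)}, {(0,0),(1,0),(0,1)}, (0,0))]]"

text \<open>
  \<open>successor ! i ! (k - 2)\<close> is the index of a set reached from \<open>family ! i\<close> by an edge with \<open>k\<close>
  new vertices, and \<open>initial_successor ! (n - 3)\<close> that of a set realised by a single edge with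
  \<open>n\<close> vertices.
\<close>

definition successor :: "nat list list" where
  "successor =
    [[16, 17, 10, 11], [0, 5, 20, 8], [8, 0, 5, 20], [22, 7, 1, 18], [13, 18, 24, 2],
     [21, 27, 14, 26], [15, 4, 19, 3], [8, 0, 5, 20], [6, 16, 17, 10], [18, 22, 7, 13],
     [3, 15, 4, 9], [15, 4, 9, 3], [22, 7, 13, 18], [0, 5, 20, 8], [15, 4, 9, 3],
     [7, 1, 18, 22], [4, 9, 3, 15], [19, 3, 15, 23], [5, 20, 8, 0], [18, 22, 7, 1],
     [27, 14, 26, 21], [9, 3, 15, 4], [20, 8, 0, 5], [1, 18, 22, 7], [20, 8, 0, 5],
     [1, 18, 22, 2], [25, 9, 3, 15], [12, 15, 4, 9]]"

definition initial_successor :: "nat list" where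
  "initial_successor = [16, 17, 10, 11]"

definition certified_successors ::
    "state list list \<Rightarrow> state list \<Rightarrow> nat list \<Rightarrow> nat list \<Rightarrow> bool" where
  "certified_successors F S ks js \<longleftrightarrow>
     list_all2 (\<lambda>k j. j < length F \<and> certified_step k S (F ! j)) ks js"

lemma family_certificate:
  "list_all2 (\<lambda>S. certified_successors family S [2..<6]) family successor"
  "certified_successors family [({}, {}, 0)] [3..<7] initial_successor"
  "list_all (\<lambda>S. S \<noteq> []) family"
  by code_simp+

lemma certified_successors_step:
  assumes "certified_successors family S [m..<m + 4] js" "m \<le> k"
  shows "\<exists>S'' \<in> set family. \<forall>\<sigma> \<in> set S''. \<exists>\<sigma>' \<in> set S. edge_step k \<sigma>' \<sigma>"
proof -
  define i where "i = (k - m) mod 4"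
  have i: "i < 4" "k = (m + i) + 4 * ((k - m) div 4)"
    using assms(2) unfolding i_def by auto
  then have "js ! i < length family" "certified_step (m + i) S (family ! (js ! i))"
    using list_all2_nthD[OF assms(1)[unfolded certified_successors_def], of i] by auto
  then show ?thesis
    using certified_step_sound[of "m + i" S "family ! (js ! i)" _ "(k - m) div 4"] i(2)
    by (metis nth_mem)
qed

lemma family_step:
  assumes "S \<in> set family" "2 \<le> k"
  shows "\<exists>S'' \<in> set family. \<forall>\<sigma> \<in> set S''. \<exists>\<sigma>' \<in> set S. edge_step k \<sigma>' \<sigma>"
proof -
  obtain i where "i < length family" "S = family ! i"
    using assms(1) by (metis in_set_conv_nth)
  then have "certified_successors family S [2..<2 + 4] (successor ! i)"
    using list_all2_nthD[OF family_certificate(1)] by simp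
  then show ?thesis using certified_successors_step assms(2) by blast
qed

lemma family_initial:
  assumes "3 \<le> n"
  shows "\<exists>S \<in> set family. \<forall>\<sigma> \<in> set S. edge_step n ({}, {}, 0) \<sigma>"
  using certified_successors_step[of "[({}, {}, 0)]" 3 initial_successor n] family_certificate(2)
    assms by simp

lemma hyperpath_realizes_family:
  "hyperpath es \<Longrightarrow> \<exists>S \<in> set family. \<forall>\<sigma> \<in> set S. realizes es \<sigma>"
proof (induction es)
  case Nil
  then show ?case using hyperpathD(1) by blast
next
  case (Cons e es)
  have e: "finite e" "3 \<le> card e" using hyperpath_edge[OF Cons.prems] by auto
  show ?case
  proof (cases "es = []")
    case True
    obtain S where "S \<in> set family" "\<forall>\<sigma> \<in> set S. edge_step (card e) ({}, {}, 0) \<sigma>"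
      using family_initial[OF e(2)] by blast
    then show ?thesis
      unfolding True using realizes_single[OF e(1)] by blast
  next
    case False
    obtain S where S: "S \<in> set family" "\<forall>\<sigma> \<in> set S. realizes es \<sigma>"
      using Cons.IH[OF hyperpath_tl[OF Cons.prems False]] by blast
    have "2 \<le> card e - 1" using e(2) by simp
    then obtain S'' where S'': "S'' \<in> set family"
        "\<forall>\<sigma> \<in> set S''. \<exists>\<sigma>' \<in> set S. edge_step (card e - 1) \<sigma>' \<sigma>"
      using family_step[OF S(1)] by blast
    then show ?thesis
      using S(2) realizes_Cons[OF Cons.prems False] by blast
  qed
qed

lemma realizes_imp_cordial:
  assumes "hyperpath es" "realizes es \<sigma>"
  shows "A_cordial es"
proof -
  obtain Dv De r where \<sigma>: "\<sigma> = (Dv, De, r)" by (cases \<sigma>)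
  obtain x where "x \<in> head_private es"
    using head_private_nonempty[OF assms(1)] by blast
  then obtain c where "balanced_up_to Dv (vcount es c)" "balanced_up_to De (ecount es c)"
    using assms(2) unfolding \<sigma> by auto
  then have "A_friendly es c" "\<forall>a b. \<bar>int (ecount es c a) - int (ecount es c b)\<bar> \<le> 1"
    unfolding A_friendly_def by (auto intro: balanced_up_to_diff_le_1)
  then show ?thesis unfolding A_cordial_def by blast
qed

theorem theorem8:
  fixes es :: "'v set list"
  assumes "hyperpath es"
  shows "A_cordial es"
proof -
  obtain S where S: "S \<in> set family" "\<forall>\<sigma> \<in> set S. realizes es \<sigma>"
    using hyperpath_realizes_family[OF assms] by blast
  moreover have "S \<noteq> []"
    using family_certificate(3) S(1) by (simp add: list_all_iff)
  ultimately obtain \<sigma> where "realizes es \<sigma>"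
    using hd_in_set by blast
  then show ?thesis by (rule realizes_imp_cordial[OF assms])
qed

end
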